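(* Let $f,g\in\mathbb L^2([0,1])$, let $X$ be distributed according to the model below and $\Delta=\|f-g\|$. Let $0<\epsilon\le1/8$ and $d\in\mathbb N^*$ be such that \[ \max\big(\|f-f_d\|^2,\|g-g_d\|^2\big)\le\frac{\epsilon^2}{512\ln(1/\epsilon^2)}. \] Then \[ \mathcal R_{f,g}(\Phi_d^\star)-\mathcal R_{f,g}(\Phi^\star)\le 12\epsilon^2+2\epsilon\Big(1\wedge\frac{10\epsilon}\Delta\Big). \]
   Context: Model: $Y\sim\mathrm{Bernoulli}(1/2)$ independent of a standard Brownian motion $W$ on $[0,1]$, $dX(t)=Yf(t)\,dt+(1-Y)g(t)\,dt+dW(t)$. Risk $\mathcal R_{f,g}(\Phi)=\mathbb P(\Phi(X)\ne Y)$. $(\varphi_j)_{j\ge1}$ is an orthonormal basis of $\mathbb L^2([0,1])$ and $\Pi_d(h)=\sum_{j=1}^d\langle\varphi_j,h\rangle\varphi_j$; $f_d=\Pi_d(f)$, $g_d=\Pi_d(g)$. Bayes classifier: $\Phi^\star(X)=\mathbf 1\{\int_0^1(f-g)(s)\,dX_s\ge\frac12\|f\|^2-\frac12\|g\|^2\}$. Truncated oracle: $\Phi_d^\star(X)=\mathbf 1\{\int_0^1(f_d-g_d)(s)\,dX_s\ge\frac12\|f_d\|^2-\frac12\|g_d\|^2\}$. $\|\cdot\|$ is the $\mathbb L^2$ norm, $a\wedge b=\min\{a,b\}$, and $10\epsilon/\Delta=+\infty$ if $\Delta=0$. *)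

theory Defs
  imports "HOL-Probability.Probability"
begin

definition sq_int :: "(real \<Rightarrow> real) \<Rightarrow> bool" where
  "sq_int h \<longleftrightarrow> h \<in> borel_measurable lborel \<and> set_integrable lborel {0..1} (\<lambda>t. (h t)^2)"

definition ip :: "(real \<Rightarrow> real) \<Rightarrow> (real \<Rightarrow> real) \<Rightarrow> real" where
  "ip h k = (LINT t:{0..1}|lborel. h t * k t)"

definition l2norm :: "(real \<Rightarrow> real) \<Rightarrow> real" where
  "l2norm h = sqrt (ip h h)"

definition proj :: "(nat \<Rightarrow> real \<Rightarrow> real) \<Rightarrow> nat \<Rightarrow> (real \<Rightarrow> real) \<Rightarrow> real \<Rightarrow> real" where
  "proj \<phi> d h = (\<lambda>t. \<Sum>j=1..d. ip (\<phi> j) h * \<phi> j t)"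

definition orthonormal_basis :: "(nat \<Rightarrow> real \<Rightarrow> real) \<Rightarrow> bool" where
  "orthonormal_basis \<phi> \<longleftrightarrow>
     (\<forall>j\<ge>1. sq_int (\<phi> j)) \<and>
     (\<forall>i\<ge>1. \<forall>j\<ge>1. ip (\<phi> i) (\<phi> j) = (if i = j then 1 else 0)) \<and>
     (\<forall>h. sq_int h \<longrightarrow> (\<lambda>d. l2norm (\<lambda>t. h t - proj \<phi> d h t)) \<longlonglongrightarrow> 0)"

text \<open>Wiener integral W h = int_0^1 h(s) dW_s of a standard Brownian motion on [0,1]:
  linear in h, centred Gaussian with variance ||h||^2 (degenerate at 0 when ||h|| = 0).\<close>

definition wiener_integral :: "'w measure \<Rightarrow> ((real \<Rightarrow> real) \<Rightarrow> 'w \<Rightarrow> real) \<Rightarrow> bool" where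
  "wiener_integral M W \<longleftrightarrow>
     (\<forall>h. sq_int h \<longrightarrow> W h \<in> borel_measurable M \<and>
        (l2norm h > 0 \<longrightarrow> distributed M lborel (W h) (normal_density 0 (l2norm h))) \<and>
        (l2norm h = 0 \<longrightarrow> (AE \<omega> in M. W h \<omega> = 0))) \<and>
     (\<forall>h k a b. sq_int h \<longrightarrow> sq_int k \<longrightarrow>
        (AE \<omega> in M. W (\<lambda>t. a * h t + b * k t) \<omega> = a * W h \<omega> + b * W k \<omega>))"

text \<open>The observation functional: int_0^1 h(s) dX_s, where dX = (Y f + (1-Y) g) dt + dW.\<close>

definition obs :: "(real \<Rightarrow> real) \<Rightarrow> (real \<Rightarrow> real) \<Rightarrow> ('w \<Rightarrow> real) \<Rightarrow> ((real \<Rightarrow> real) \<Rightarrow> 'w \<Rightarrow> real)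
                   \<Rightarrow> (real \<Rightarrow> real) \<Rightarrow> 'w \<Rightarrow> real" where
  "obs f g Y W h \<omega> = Y \<omega> * ip h f + (1 - Y \<omega>) * ip h g + W h \<omega>"

definition lin_classifier :: "(real \<Rightarrow> real) \<Rightarrow> (real \<Rightarrow> real) \<Rightarrow> ('w \<Rightarrow> real) \<Rightarrow> ((real \<Rightarrow> real) \<Rightarrow> 'w \<Rightarrow> real)
                   \<Rightarrow> (real \<Rightarrow> real) \<Rightarrow> (real \<Rightarrow> real) \<Rightarrow> 'w \<Rightarrow> real" where
  "lin_classifier f g Y W u v \<omega> =
     (if obs f g Y W (\<lambda>t. u t - v t) \<omega> \<ge> (l2norm u)^2 / 2 - (l2norm v)^2 / 2 then 1 else 0)"

definition risk :: "'w measure \<Rightarrow> ('w \<Rightarrow> real) \<Rightarrow> ('w \<Rightarrow> real) \<Rightarrow> real" where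
  "risk M Y \<Phi> = measure M {\<omega> \<in> space M. \<Phi> \<omega> \<noteq> Y \<omega>}"

end

theory Submission
  imports Defs
begin

text \<open>Both classifiers are linear, and a linear classifier whose direction \<open>a = u - v\<close> is
  orthogonal to \<open>f - u\<close> and \<open>g - v\<close> errs with probability \<open>\<Phi>(-\<parallel>a\<parallel>/2)\<close>: the class means are
  then at signed distance \<open>\<plusminus>\<parallel>a\<parallel>\<^sup>2/2\<close> from the threshold, and the noise \<open>\<integral>a dW\<close> is
  \<open>N(0, \<parallel>a\<parallel>\<^sup>2)\<close> and independent of the label.  For the truncated oracle \<open>\<parallel>a\<parallel> = \<sigma> = \<parallel>f\<^sub>d - g\<^sub>d\<parallel>\<close>,
  for the Bayes classifier \<open>\<parallel>a\<parallel> = \<Delta>\<close>, and by Pythagoras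
  \<open>\<Delta>\<^sup>2 - \<sigma>\<^sup>2 = \<parallel>(f - f\<^sub>d) - (g - g\<^sub>d)\<parallel>\<^sup>2 \<le> 4\<epsilon>\<^sup>2\<close>.  Since the standard normal density is
  bounded by 1, the excess risk is at most \<open>(\<Delta> - \<sigma>)/2\<close>, and
  \<open>\<Delta> - \<sigma> \<le> min (\<surd>(\<Delta>\<^sup>2 - \<sigma>\<^sup>2)) ((\<Delta>\<^sup>2 - \<sigma>\<^sup>2)/\<Delta>)\<close>.\<close>

lemma ip_eq_integral: "ip h k = integral\<^sup>L lborel (\<lambda>t. indicator {0..1} t * (h t * k t))"
  unfolding ip_def set_lebesgue_integral_def by simp

lemma sq_int_iff_integrable:
  "sq_int h \<longleftrightarrow> h \<in> borel_measurable borel \<and>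
     integrable lborel (\<lambda>t. indicator {0..1} t * (h t)\<^sup>2)"
  unfolding sq_int_def set_integrable_def by simp

lemma integrable_ip:
  assumes "sq_int h" "sq_int k"
  shows "integrable lborel (\<lambda>t. indicator {0..1::real} t * (h t * k t))"
proof (rule Bochner_Integration.integrable_bound)
  show "integrable lborel (\<lambda>t. indicator {0..1::real} t * (h t)\<^sup>2 + indicator {0..1} t * (k t)\<^sup>2)"
    using assms unfolding sq_int_iff_integrable by auto
  show "(\<lambda>t. indicator {0..1::real} t * (h t * k t)) \<in> borel_measurable lborel"
    using assms unfolding sq_int_iff_integrable by auto
  have "\<bar>h t * k t\<bar> \<le> (h t)\<^sup>2 + (k t)\<^sup>2" for t
  proof -
    have "2 * (\<bar>h t\<bar> * \<bar>k t\<bar>) \<le> (h t)\<^sup>2 + (k t)\<^sup>2"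
      using sum_squares_bound[of "\<bar>h t\<bar>" "\<bar>k t\<bar>"] by (simp add: mult.assoc)
    moreover have "0 \<le> \<bar>h t\<bar> * \<bar>k t\<bar>" by simp
    ultimately show ?thesis unfolding abs_mult by linarith
  qed
  then show "AE t in lborel. norm (indicator {0..1::real} t * (h t * k t)) \<le>
      norm (indicator {0..1::real} t * (h t)\<^sup>2 + indicator {0..1} t * (k t)\<^sup>2)"
    by (auto simp: indicator_def)
qed

lemma sq_int_lincomb:
  assumes "sq_int h" "sq_int k"
  shows "sq_int (\<lambda>t. a * h t + b * k t)"
proof -
  have "(\<lambda>t. indicator {0..1::real} t * (a * h t + b * k t)\<^sup>2) =
    (\<lambda>t. a\<^sup>2 * (indicator {0..1} t * (h t)\<^sup>2) + (2 * a * b) * (indicator {0..1} t * (h t * k t))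
        + b\<^sup>2 * (indicator {0..1} t * (k t)\<^sup>2))"
    by (auto simp: power2_eq_square algebra_simps)
  then show ?thesis
    using assms integrable_ip[OF assms] unfolding sq_int_iff_integrable by auto
qed

lemma sq_int_add: "sq_int h \<Longrightarrow> sq_int k \<Longrightarrow> sq_int (\<lambda>t. h t + k t)"
  using sq_int_lincomb[of h k 1 1] by simp

lemma sq_int_diff: "sq_int h \<Longrightarrow> sq_int k \<Longrightarrow> sq_int (\<lambda>t. h t - k t)"
  using sq_int_lincomb[of h k 1 "-1"] by simp

lemma sq_int_sum:
  "finite A \<Longrightarrow> (\<And>j. j \<in> A \<Longrightarrow> sq_int (p j)) \<Longrightarrow> sq_int (\<lambda>t. \<Sum>j\<in>A. c j * p j t)"
proof (induction A rule: finite_induct)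
  case empty
  then show ?case by (simp add: sq_int_iff_integrable)
next
  case (insert x F)
  then show ?case
    using sq_int_lincomb[of "p x" "\<lambda>t. \<Sum>j\<in>F. c j * p j t" "c x" 1] by simp
qed

lemma ip_lincomb_left:
  assumes "sq_int h" "sq_int k" "sq_int l"
  shows "ip (\<lambda>t. a * h t + b * k t) l = a * ip h l + b * ip k l"
proof -
  have "(\<lambda>t. indicator {0..1::real} t * ((a * h t + b * k t) * l t)) =
    (\<lambda>t. a * (indicator {0..1} t * (h t * l t)) + b * (indicator {0..1} t * (k t * l t)))"
    by (auto simp: algebra_simps)
  then show ?thesis
    unfolding ip_eq_integral
    using integrable_ip[OF assms(1,3)] integrable_ip[OF assms(2,3)] by simp
qed

lemma ip_commute: "ip h k = ip k h"
  unfolding ip_eq_integral by (simp add: mult.commute)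

lemma ip_self_nonneg: "0 \<le> ip h h"
  unfolding ip_eq_integral by (rule integral_nonneg_AE) (auto simp: indicator_def)

lemma l2norm_nonneg: "0 \<le> l2norm h"
  unfolding l2norm_def using ip_self_nonneg[of h] by simp

lemma l2norm_power2: "(l2norm h)\<^sup>2 = ip h h"
  unfolding l2norm_def using ip_self_nonneg[of h] by simp

lemma ip_add_left:
  "sq_int h \<Longrightarrow> sq_int k \<Longrightarrow> sq_int l \<Longrightarrow> ip (\<lambda>t. h t + k t) l = ip h l + ip k l"
  using ip_lincomb_left[of h k l 1 1] by simp

lemma ip_diff_left:
  "sq_int h \<Longrightarrow> sq_int k \<Longrightarrow> sq_int l \<Longrightarrow> ip (\<lambda>t. h t - k t) l = ip h l - ip k l"
  using ip_lincomb_left[of h k l 1 "-1"] by simp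

lemma ip_add_right:
  "sq_int h \<Longrightarrow> sq_int k \<Longrightarrow> sq_int l \<Longrightarrow> ip l (\<lambda>t. h t + k t) = ip l h + ip l k"
  using ip_add_left[of h k l] by (simp add: ip_commute)

lemma ip_diff_right:
  "sq_int h \<Longrightarrow> sq_int k \<Longrightarrow> sq_int l \<Longrightarrow> ip l (\<lambda>t. h t - k t) = ip l h - ip l k"
  using ip_diff_left[of h k l] by (simp add: ip_commute)

lemma ip_sum_left:
  assumes "finite A" "\<And>j. j \<in> A \<Longrightarrow> sq_int (p j)" "sq_int l"
  shows "ip (\<lambda>t. \<Sum>j\<in>A. c j * p j t) l = (\<Sum>j\<in>A. c j * ip (p j) l)"
  using assms(1,2)
proof (induction A rule: finite_induct)
  case empty
  then show ?case unfolding ip_eq_integral by simp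
next
  case (insert x F)
  have "ip (\<lambda>t. \<Sum>j\<in>insert x F. c j * p j t) l = ip (\<lambda>t. c x * p x t + 1 * (\<Sum>j\<in>F. c j * p j t)) l"
    using insert by simp
  also have "\<dots> = c x * ip (p x) l + 1 * ip (\<lambda>t. \<Sum>j\<in>F. c j * p j t) l"
    using insert assms(3) sq_int_sum[of F p c] by (intro ip_lincomb_left) auto
  finally show ?case using insert by simp
qed

lemma l2norm_add_power2:
  "sq_int h \<Longrightarrow> sq_int k \<Longrightarrow>
     (l2norm (\<lambda>t. h t + k t))\<^sup>2 = (l2norm h)\<^sup>2 + 2 * ip h k + (l2norm k)\<^sup>2"
  by (simp add: l2norm_power2 ip_add_left ip_add_right sq_int_add ip_commute[of k h])

lemma l2norm_diff_power2:
  "sq_int h \<Longrightarrow> sq_int k \<Longrightarrow>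
     (l2norm (\<lambda>t. h t - k t))\<^sup>2 = (l2norm h)\<^sup>2 - 2 * ip h k + (l2norm k)\<^sup>2"
  by (simp add: l2norm_power2 ip_diff_left ip_diff_right sq_int_diff ip_commute[of k h])

lemma l2norm_diff_power2_le:
  assumes "sq_int h" "sq_int k"
  shows "(l2norm (\<lambda>t. h t - k t))\<^sup>2 \<le> 2 * (l2norm h)\<^sup>2 + 2 * (l2norm k)\<^sup>2"
  using l2norm_diff_power2[OF assms] l2norm_add_power2[OF assms]
    zero_le_power2[of "l2norm (\<lambda>t. h t + k t)"] by linarith

lemma sq_int_proj: "orthonormal_basis \<phi> \<Longrightarrow> sq_int (proj \<phi> d h)"
  unfolding proj_def orthonormal_basis_def
  by (rule sq_int_sum[where p = \<phi> and c = "\<lambda>j. ip (\<phi> j) h", simplified]) auto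

lemma ip_basis_residual:
  assumes "orthonormal_basis \<phi>" "sq_int h" "j \<in> {1..d}"
  shows "ip (\<phi> j) (\<lambda>t. h t - proj \<phi> d h t) = 0"
proof -
  have \<phi>j: "sq_int (\<phi> j)" using assms unfolding orthonormal_basis_def by auto
  have "ip (\<phi> j) (\<lambda>t. h t - proj \<phi> d h t) = ip (\<phi> j) h - ip (\<phi> j) (proj \<phi> d h)"
    using assms \<phi>j sq_int_proj by (intro ip_diff_right) auto
  also have "ip (\<phi> j) (proj \<phi> d h) = ip (proj \<phi> d h) (\<phi> j)"
    by (rule ip_commute)
  also have "ip (proj \<phi> d h) (\<phi> j) = (\<Sum>i\<in>{1..d}. ip (\<phi> i) h * ip (\<phi> i) (\<phi> j))"
    unfolding proj_def using assms \<phi>j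
    by (intro ip_sum_left) (auto simp: orthonormal_basis_def)
  also have "\<dots> = (\<Sum>i\<in>{1..d}. if i = j then ip (\<phi> i) h else 0)"
    using assms by (intro sum.cong) (auto simp: orthonormal_basis_def)
  also have "\<dots> = ip (\<phi> j) h" using assms(3) by simp
  finally show ?thesis by simp
qed

lemma ip_proj_residual:
  assumes "orthonormal_basis \<phi>" "sq_int h" "sq_int k"
  shows "ip (proj \<phi> d k) (\<lambda>t. h t - proj \<phi> d h t) = 0"
proof -
  have "ip (proj \<phi> d k) (\<lambda>t. h t - proj \<phi> d h t) =
      (\<Sum>j\<in>{1..d}. ip (\<phi> j) k * ip (\<phi> j) (\<lambda>t. h t - proj \<phi> d h t))"
    unfolding proj_def[of \<phi> d k] using assms sq_int_diff sq_int_proj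
    by (intro ip_sum_left) (auto simp: orthonormal_basis_def)
  then show ?thesis using ip_basis_residual[OF assms(1,2)] by simp
qed

lemma ip_proj_diff_residual:
  assumes "orthonormal_basis \<phi>" "sq_int h" "sq_int k" "sq_int l"
  shows "ip (\<lambda>t. proj \<phi> d k t - proj \<phi> d l t) (\<lambda>t. h t - proj \<phi> d h t) = 0"
  using assms ip_proj_residual[OF assms(1,2)] sq_int_proj sq_int_diff
  by (simp add: ip_diff_left)

lemma ip_proj_diff_eq_proj:
  assumes "orthonormal_basis \<phi>" "sq_int h" "sq_int k" "sq_int l"
  shows "ip (\<lambda>t. proj \<phi> d k t - proj \<phi> d l t) h = ip (\<lambda>t. proj \<phi> d k t - proj \<phi> d l t) (proj \<phi> d h)"
  using assms ip_proj_diff_residual[OF assms] sq_int_proj sq_int_diff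
  by (simp add: ip_diff_right)

lemma l2norm_diff_pythagoras:
  assumes "orthonormal_basis \<phi>" "sq_int f" "sq_int g"
  shows "(l2norm (\<lambda>t. f t - g t))\<^sup>2 = (l2norm (\<lambda>t. proj \<phi> d f t - proj \<phi> d g t))\<^sup>2
           + (l2norm (\<lambda>t. (f t - proj \<phi> d f t) - (g t - proj \<phi> d g t)))\<^sup>2"
proof -
  let ?a = "\<lambda>t. proj \<phi> d f t - proj \<phi> d g t"
  let ?e = "\<lambda>t. (f t - proj \<phi> d f t) - (g t - proj \<phi> d g t)"
  have a: "sq_int ?a" and r: "sq_int (\<lambda>t. f t - proj \<phi> d f t)"
    and s: "sq_int (\<lambda>t. g t - proj \<phi> d g t)"
    using assms sq_int_proj sq_int_diff by blast+
  have "ip ?a ?e = ip ?a (\<lambda>t. f t - proj \<phi> d f t) - ip ?a (\<lambda>t. g t - proj \<phi> d g t)"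
    using ip_diff_right[OF r s a] .
  also have "\<dots> = 0"
    using ip_proj_diff_residual[OF assms(1,2)] ip_proj_diff_residual[OF assms(1,3)] assms by simp
  finally have "ip ?a ?e = 0" .
  moreover have "(\<lambda>t. f t - g t) = (\<lambda>t. ?a t + ?e t)" by auto
  ultimately show ?thesis
    using l2norm_add_power2[OF a sq_int_diff[OF r s]] by simp
qed

definition std_normal :: "real measure" where
  "std_normal = density lborel (\<lambda>x. ennreal (std_normal_density x))"

text \<open>The error probability \<open>\<Phi>(-\<sigma>/2)\<close> of a linear classifier whose class means are
  \<open>\<sigma>\<close> standard deviations apart, written without appeal to the symmetry of \<open>\<Phi>\<close>.\<close>

definition gauss_error :: "real \<Rightarrow> real" where
  "gauss_error \<sigma> = measure std_normal {..< -\<sigma>/2} / 2 + measure std_normal {\<sigma>/2..} / 2"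

lemma prob_space_std_normal: "prob_space std_normal"
  unfolding std_normal_def by (rule prob_space_normal_density) simp

lemma sets_std_normal [simp]: "sets std_normal = sets borel"
  by (simp add: std_normal_def)

lemma space_std_normal [simp]: "space std_normal = UNIV"
  by (simp add: std_normal_def)

lemma std_normal_density_le_1: "std_normal_density x \<le> 1"
proof -
  have "1 / sqrt (2 * pi) \<le> 1" using pi_gt3 by simp
  moreover have "exp (- x\<^sup>2 / 2) \<le> 1" by simp
  ultimately show ?thesis
    unfolding std_normal_density_def by (intro mult_le_one) auto
qed

lemma measure_std_normal_atLeastLessThan_le:
  assumes "a \<le> b"
  shows "measure std_normal {a..<b} \<le> b - a"
proof -
  interpret prob_space std_normal by (rule prob_space_std_normal)
  have "emeasure std_normal {a..<b} = (\<integral>\<^sup>+x. ennreal (std_normal_density x) * indicator {a..<b} x \<partial>lborel)"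
    unfolding std_normal_def by (subst emeasure_density) auto
  also have "\<dots> \<le> (\<integral>\<^sup>+x. indicator {a..<b} x \<partial>lborel)"
    by (rule nn_integral_mono) (auto simp: indicator_def std_normal_density_le_1)
  also have "\<dots> = ennreal (b - a)" using assms by simp
  finally have "ennreal (measure std_normal {a..<b}) \<le> ennreal (b - a)"
    by (simp add: emeasure_eq_measure)
  then show ?thesis using assms by (simp add: ennreal_le_iff)
qed

lemma gauss_error_diff_le:
  assumes "0 \<le> \<sigma>" "\<sigma> \<le> \<Delta>"
  shows "gauss_error \<sigma> - gauss_error \<Delta> \<le> (\<Delta> - \<sigma>) / 2"
proof -
  interpret prob_space std_normal by (rule prob_space_std_normal)
  have lower_split: "{..< -\<sigma>/2} = {..< -\<Delta>/2} \<union> {-\<Delta>/2..< -\<sigma>/2}"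
    using assms by auto
  have lower: "measure std_normal {..< -\<sigma>/2} =
      measure std_normal {..< -\<Delta>/2} + measure std_normal {-\<Delta>/2..< -\<sigma>/2}"
    unfolding lower_split by (rule finite_measure_Union) auto
  have upper_split: "{\<sigma>/2..} = {\<Delta>/2..} \<union> {\<sigma>/2..< \<Delta>/2}" using assms by auto
  have upper: "measure std_normal {\<sigma>/2..} =
      measure std_normal {\<Delta>/2..} + measure std_normal {\<sigma>/2..<\<Delta>/2}"
    unfolding upper_split by (rule finite_measure_Union) auto
  have "measure std_normal {-\<Delta>/2..< -\<sigma>/2} \<le> -\<sigma>/2 - -\<Delta>/2"
    using assms by (intro measure_std_normal_atLeastLessThan_le) simp
  moreover have "measure std_normal {\<sigma>/2..<\<Delta>/2} \<le> \<Delta>/2 - \<sigma>/2"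
    using assms by (intro measure_std_normal_atLeastLessThan_le) simp
  ultimately
  show ?thesis unfolding gauss_error_def lower upper by (simp add: field_simps)
qed

lemma measure_tails_eq_gauss_error:
  assumes "prob_space M" "X \<in> borel_measurable M" "0 \<le> \<sigma>"
    and "0 < \<sigma> \<Longrightarrow> distributed M lborel X (normal_density 0 \<sigma>)"
    and "\<sigma> = 0 \<Longrightarrow> (AE \<omega> in M. X \<omega> = 0)"
  shows "measure M {\<omega>\<in>space M. X \<omega> < -\<sigma>\<^sup>2/2} / 2 + measure M {\<omega>\<in>space M. \<sigma>\<^sup>2/2 \<le> X \<omega>} / 2
           = gauss_error \<sigma>"
proof (cases "\<sigma> = 0")
  case True
  interpret prob_space M by fact
  interpret N: prob_space std_normal by (rule prob_space_std_normal)
  have [measurable]: "X \<in> borel_measurable M" by fact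
  have "measure M {\<omega>\<in>space M. X \<omega> < 0} = measure M {}"
    by (rule measure_eq_AE) (use assms(5)[OF True] in auto)
  moreover have "measure M {\<omega>\<in>space M. 0 \<le> X \<omega>} = measure M (space M)"
    by (rule measure_eq_AE) (use assms(5)[OF True] in auto)
  moreover have "measure std_normal {..<0} + measure std_normal {0..} = 1"
  proof -
    have "measure std_normal {..<0} + measure std_normal {0..} = measure std_normal ({..<0} \<union> {0..})"
      by (rule N.finite_measure_Union[symmetric]) auto
    also have "({..<0::real} \<union> {0..}) = space std_normal" by auto
    finally show ?thesis using N.prob_space by simp
  qed
  ultimately show ?thesis
    using True unfolding gauss_error_def by (simp add: prob_space)
next
  case False
  interpret prob_space M by fact
  have \<sigma>: "0 < \<sigma>" using False assms(3) by simp
  let ?Z = "\<lambda>\<omega>. (X \<omega> - 0) / \<sigma>"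
  have Z_distributed: "distributed M lborel ?Z std_normal_density"
    using assms(4)[OF \<sigma>] normal_standard_normal_convert[OF \<sigma>] by simp
  then have distr_Z: "distr M lborel ?Z = std_normal"
    unfolding std_normal_def by (simp add: distributed_distr_eq_density)
  have Z: "?Z \<in> measurable M lborel"
    using distributed_measurable[OF Z_distributed] by simp
  have "{\<omega>\<in>space M. X \<omega> < -\<sigma>\<^sup>2/2} = ?Z -` {..< -\<sigma>/2} \<inter> space M"
    using \<sigma> by (auto simp: divide_less_eq power2_eq_square field_simps)
  moreover have "{\<omega>\<in>space M. \<sigma>\<^sup>2/2 \<le> X \<omega>} = ?Z -` {\<sigma>/2..} \<inter> space M"
    using \<sigma> by (auto simp: le_divide_eq power2_eq_square field_simps)
  ultimately show ?thesis
    unfolding gauss_error_def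
    using measure_distr[OF Z, of "{..< -\<sigma>/2}"] measure_distr[OF Z, of "{\<sigma>/2..}"] distr_Z
    by simp
qed

lemma measure_misclassified:
  fixes M :: "'w measure" and Y X :: "'w \<Rightarrow> real" and p q c s :: real
  assumes "prob_space M" "Y \<in> borel_measurable M" "\<forall>\<omega>\<in>space M. Y \<omega> \<in> {0, 1}"
    and "measure M {\<omega> \<in> space M. Y \<omega> = 1} = 1/2" "X \<in> borel_measurable M"
    and "prob_space.indep_var M borel Y borel X" "p - c = s/2" "q - c = -s/2"
  shows "measure M {\<omega>\<in>space M. (if Y \<omega> * p + (1 - Y \<omega>) * q + X \<omega> \<ge> c then 1 else 0) \<noteq> Y \<omega>}
     = measure M {\<omega>\<in>space M. X \<omega> < -s/2} / 2 + measure M {\<omega>\<in>space M. s/2 \<le> X \<omega>} / 2"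
proof -
  interpret prob_space M by fact
  have [measurable]: "Y \<in> borel_measurable M" "X \<in> borel_measurable M" by fact+
  let ?A = "{\<omega>\<in>space M. Y \<omega> = 1 \<and> X \<omega> < -s/2}"
  let ?B = "{\<omega>\<in>space M. Y \<omega> = 0 \<and> s/2 \<le> X \<omega>}"
  have indep: "prob {\<omega>\<in>space M. Y \<omega> = y \<and> X \<omega> \<in> B} =
      prob {\<omega>\<in>space M. Y \<omega> = y} * prob {\<omega>\<in>space M. X \<omega> \<in> B}" if "B \<in> sets borel" for y B
  proof -
    have "prob {\<omega>\<in>space M. Y \<omega> = y \<and> X \<omega> \<in> B} = prob ((\<lambda>\<omega>. (Y \<omega>, X \<omega>)) -` ({y} \<times> B) \<inter> space M)"
      by (rule arg_cong[where f = prob]) auto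
    also have "\<dots> = prob (Y -` {y} \<inter> space M) * prob (X -` B \<inter> space M)"
      using that by (intro indep_varD[OF assms(6)]) auto
    also have "Y -` {y} \<inter> space M = {\<omega>\<in>space M. Y \<omega> = y}" by auto
    also have "X -` B \<inter> space M = {\<omega>\<in>space M. X \<omega> \<in> B}" by auto
    finally show ?thesis .
  qed
  have "(if Y \<omega> * p + (1 - Y \<omega>) * q + X \<omega> \<ge> c then 1 else 0) \<noteq> Y \<omega> \<longleftrightarrow>
      (Y \<omega> = 1 \<and> X \<omega> < -s/2) \<or> (Y \<omega> = 0 \<and> s/2 \<le> X \<omega>)" if "Y \<omega> \<in> {0, 1}" for \<omega>
  proof -
    have "p = c + s/2" "q = c - s/2" using assms(7,8) by linarith+
    then show ?thesis using that by auto
  qed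
  then have "{\<omega>\<in>space M. (if Y \<omega> * p + (1 - Y \<omega>) * q + X \<omega> \<ge> c then 1 else 0) \<noteq> Y \<omega>} = ?A \<union> ?B"
    using assms(3) by blast
  moreover have "measure M (?A \<union> ?B) = measure M ?A + measure M ?B"
    by (rule finite_measure_Union) auto
  moreover have "prob ?A = prob {\<omega>\<in>space M. X \<omega> < -s/2} / 2"
    using indep[of "{..< -s/2}" 1] assms(4) by simp
  moreover have "prob {\<omega>\<in>space M. Y \<omega> = 0} = 1/2"
  proof -
    have "{\<omega>\<in>space M. Y \<omega> = 0} = space M - {\<omega> \<in> space M. Y \<omega> = 1}" using assms(3) by auto
    then show ?thesis using assms(4) by (simp add: prob_compl)
  qed
  then have "prob ?B = prob {\<omega>\<in>space M. s/2 \<le> X \<omega>} / 2"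
    using indep[of "{s/2..}" 0] by simp
  ultimately show ?thesis by simp
qed

lemma ip_diff_minus_threshold:
  assumes "sq_int u" "sq_int v"
  shows "ip (\<lambda>t. u t - v t) u - ((l2norm u)\<^sup>2/2 - (l2norm v)\<^sup>2/2) = (l2norm (\<lambda>t. u t - v t))\<^sup>2 / 2"
    and "ip (\<lambda>t. u t - v t) v - ((l2norm u)\<^sup>2/2 - (l2norm v)\<^sup>2/2) = -((l2norm (\<lambda>t. u t - v t))\<^sup>2 / 2)"
  using assms l2norm_diff_power2[OF assms]
  by (simp_all add: ip_diff_left l2norm_power2 ip_commute[of v u] field_simps)

lemma risk_lin_classifier:
  fixes M :: "'w measure" and Y :: "'w \<Rightarrow> real" and W :: "(real \<Rightarrow> real) \<Rightarrow> 'w \<Rightarrow> real"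
  assumes "prob_space M"
    and "Y \<in> borel_measurable M"
    and "\<forall>\<omega>\<in>space M. Y \<omega> \<in> {0, 1}"
    and "measure M {\<omega> \<in> space M. Y \<omega> = 1} = 1/2"
    and "wiener_integral M W"
    and "\<forall>h. sq_int h \<longrightarrow> prob_space.indep_var M borel Y borel (W h)"
    and "sq_int u" "sq_int v"
    and "ip (\<lambda>t. u t - v t) f = ip (\<lambda>t. u t - v t) u"
    and "ip (\<lambda>t. u t - v t) g = ip (\<lambda>t. u t - v t) v"
  shows "risk M Y (lin_classifier f g Y W u v) = gauss_error (l2norm (\<lambda>t. u t - v t))"
proof -
  let ?a = "\<lambda>t. u t - v t"
  have a: "sq_int ?a" using assms sq_int_diff by auto
  then have W: "W ?a \<in> borel_measurable M"
    and "0 < l2norm ?a \<Longrightarrow> distributed M lborel (W ?a) (normal_density 0 (l2norm ?a))"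
    and "l2norm ?a = 0 \<Longrightarrow> (AE \<omega> in M. W ?a \<omega> = 0)"
    using assms(5) unfolding wiener_integral_def by auto
  then have "measure M {\<omega>\<in>space M. W ?a \<omega> < -(l2norm ?a)\<^sup>2/2} / 2
      + measure M {\<omega>\<in>space M. (l2norm ?a)\<^sup>2/2 \<le> W ?a \<omega>} / 2 = gauss_error (l2norm ?a)"
    using measure_tails_eq_gauss_error[OF assms(1) W l2norm_nonneg] by blast
  moreover have "risk M Y (lin_classifier f g Y W u v) =
      measure M {\<omega>\<in>space M. W ?a \<omega> < -(l2norm ?a)\<^sup>2/2} / 2
      + measure M {\<omega>\<in>space M. (l2norm ?a)\<^sup>2/2 \<le> W ?a \<omega>} / 2"
    unfolding risk_def lin_classifier_def obs_def
  proof (rule measure_misclassified[OF assms(1-4) W])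
    show "prob_space.indep_var M borel Y borel (W ?a)" using assms(6) a by blast
  qed (use ip_diff_minus_threshold[OF assms(7,8)] assms(9,10) in simp_all)
  ultimately show ?thesis by simp
qed

lemma le_power2_of_le_div_512_ln:
  fixes m \<epsilon> :: real
  assumes "m \<le> \<epsilon>\<^sup>2 / (512 * ln (1 / \<epsilon>\<^sup>2))" "0 < \<epsilon>" "\<epsilon> \<le> 1/8"
  shows "m \<le> \<epsilon>\<^sup>2"
proof -
  have "\<epsilon>\<^sup>2 \<le> (1/8)\<^sup>2" using assms(2,3) by (intro power_mono) auto
  then have "64 \<le> 1 / \<epsilon>\<^sup>2" using assms(2) by (simp add: field_simps)
  then have "exp 1 \<le> 1 / \<epsilon>\<^sup>2" using exp_le by linarith
  then have "1 \<le> ln (1 / \<epsilon>\<^sup>2)" using assms(2) by (simp add: ln_ge_iff)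
  then have "\<epsilon>\<^sup>2 / (512 * ln (1 / \<epsilon>\<^sup>2)) \<le> \<epsilon>\<^sup>2 / 1"
    by (intro divide_left_mono) auto
  then show ?thesis using assms(1) by linarith
qed

text \<open>From \<open>(\<Delta> - \<sigma>) (\<Delta> + \<sigma>) = \<Delta>\<^sup>2 - \<sigma>\<^sup>2\<close>, bounding \<open>\<Delta> + \<sigma>\<close> below by \<open>\<Delta> - \<sigma>\<close> and by \<open>\<Delta>\<close>.\<close>

lemma half_gap_le:
  fixes \<sigma> \<Delta> \<epsilon> :: real
  assumes "0 \<le> \<sigma>" "\<sigma> \<le> \<Delta>" "\<Delta>\<^sup>2 - \<sigma>\<^sup>2 \<le> 4 * \<epsilon>\<^sup>2" "0 < \<epsilon>"
  shows "(\<Delta> - \<sigma>) / 2 \<le> 2 * \<epsilon> * (if \<Delta> = 0 then 1 else min 1 (10 * \<epsilon> / \<Delta>))"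
proof -
  have prod: "(\<Delta> - \<sigma>) * (\<Delta> + \<sigma>) \<le> 4 * \<epsilon>\<^sup>2"
    using assms(3) by (simp add: power2_eq_square algebra_simps)
  have "(\<Delta> - \<sigma>)\<^sup>2 \<le> (2 * \<epsilon>)\<^sup>2"
    using prod mult_left_mono[of "\<Delta> - \<sigma>" "\<Delta> + \<sigma>" "\<Delta> - \<sigma>"] assms(1,2)
    by (simp add: power2_eq_square)
  then have sqrt_bound: "\<Delta> - \<sigma> \<le> 2 * \<epsilon>"
    using assms(4) power2_le_imp_le[of "\<Delta> - \<sigma>" "2 * \<epsilon>"] by simp
  show ?thesis
  proof (cases "\<Delta> = 0")
    case False
    then have "0 < \<Delta>" using assms(1,2) by simp
    moreover have "(\<Delta> - \<sigma>) * \<Delta> \<le> 4 * \<epsilon>\<^sup>2"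
      using prod mult_left_mono[of \<Delta> "\<Delta> + \<sigma>" "\<Delta> - \<sigma>"] assms(1,2) by simp
    then have "(\<Delta> - \<sigma>) * \<Delta> \<le> 40 * \<epsilon>\<^sup>2" using zero_le_power2[of \<epsilon>] by linarith
    ultimately have "(\<Delta> - \<sigma>) / 2 \<le> 2 * \<epsilon> * (10 * \<epsilon> / \<Delta>)"
      by (simp add: field_simps power2_eq_square)
    then show ?thesis using False sqrt_bound assms(4) by (simp add: min_def)
  qed (use sqrt_bound assms(1,4) in simp)
qed

theorem lemma1:
  fixes M :: "'w measure" and Y :: "'w \<Rightarrow> real" and W :: "(real \<Rightarrow> real) \<Rightarrow> 'w \<Rightarrow> real"
    and \<phi> :: "nat \<Rightarrow> real \<Rightarrow> real" and f g :: "real \<Rightarrow> real"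
    and \<epsilon> :: real and d :: nat
  assumes "prob_space M"
    and "Y \<in> borel_measurable M"
    and "\<forall>\<omega>\<in>space M. Y \<omega> \<in> {0, 1}"
    and "measure M {\<omega> \<in> space M. Y \<omega> = 1} = 1/2"
    and "wiener_integral M W"
    and "\<forall>h. sq_int h \<longrightarrow> prob_space.indep_var M borel Y borel (W h)"
    and "orthonormal_basis \<phi>"
    and "sq_int f" and "sq_int g"
    and "0 < \<epsilon>" and "\<epsilon> \<le> 1/8"
    and "d \<ge> 1"
    and "max ((l2norm (\<lambda>t. f t - proj \<phi> d f t))^2) ((l2norm (\<lambda>t. g t - proj \<phi> d g t))^2)
           \<le> \<epsilon>^2 / (512 * ln (1 / \<epsilon>^2))"
  shows "risk M Y (lin_classifier f g Y W (proj \<phi> d f) (proj \<phi> d g))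
           - risk M Y (lin_classifier f g Y W f g)
         \<le> 12 * \<epsilon>^2 + 2 * \<epsilon> * (let \<Delta> = l2norm (\<lambda>t. f t - g t) in
                                   if \<Delta> = 0 then 1 else min 1 (10 * \<epsilon> / \<Delta>))"
proof -
  let ?r = "\<lambda>t. f t - proj \<phi> d f t" and ?s = "\<lambda>t. g t - proj \<phi> d g t"
  define \<sigma> where "\<sigma> = l2norm (\<lambda>t. proj \<phi> d f t - proj \<phi> d g t)"
  define \<Delta> where "\<Delta> = l2norm (\<lambda>t. f t - g t)"
  have fd: "sq_int (proj \<phi> d f)" and gd: "sq_int (proj \<phi> d g)"
    using assms(7) sq_int_proj by blast+
  have pythagoras: "\<Delta>\<^sup>2 = \<sigma>\<^sup>2 + (l2norm (\<lambda>t. ?r t - ?s t))\<^sup>2"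
    unfolding \<sigma>_def \<Delta>_def by (rule l2norm_diff_pythagoras[OF assms(7-9)])
  have "(l2norm ?r)\<^sup>2 \<le> \<epsilon>\<^sup>2" "(l2norm ?s)\<^sup>2 \<le> \<epsilon>\<^sup>2"
    using le_power2_of_le_div_512_ln[OF assms(13,10,11)] by simp_all
  moreover have "sq_int ?r" "sq_int ?s" using assms(8,9) fd gd sq_int_diff by blast+
  ultimately have gap: "\<Delta>\<^sup>2 - \<sigma>\<^sup>2 \<le> 4 * \<epsilon>\<^sup>2"
    using pythagoras l2norm_diff_power2_le[of ?r ?s] by linarith
  have \<sigma>: "0 \<le> \<sigma>" and \<Delta>: "0 \<le> \<Delta>" unfolding \<sigma>_def \<Delta>_def by (rule l2norm_nonneg)+
  have "\<sigma> \<le> \<Delta>" by (rule power2_le_imp_le) (use pythagoras \<Delta> in simp_all)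
  have "risk M Y (lin_classifier f g Y W (proj \<phi> d f) (proj \<phi> d g))
      - risk M Y (lin_classifier f g Y W f g) = gauss_error \<sigma> - gauss_error \<Delta>"
    unfolding \<sigma>_def \<Delta>_def
    by (simp only: risk_lin_classifier[OF assms(1-6) fd gd
          ip_proj_diff_eq_proj[OF assms(7,8,8,9)] ip_proj_diff_eq_proj[OF assms(7,9,8,9)]]
        risk_lin_classifier[OF assms(1-6,8,9) refl refl])
  also have "\<dots> \<le> (\<Delta> - \<sigma>) / 2" by (rule gauss_error_diff_le[OF \<sigma> \<open>\<sigma> \<le> \<Delta>\<close>])
  also have "\<dots> \<le> 2 * \<epsilon> * (if \<Delta> = 0 then 1 else min 1 (10 * \<epsilon> / \<Delta>))"
    by (rule half_gap_le[OF \<sigma> \<open>\<sigma> \<le> \<Delta>\<close> gap assms(10)])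
  also have "\<dots> \<le> 12 * \<epsilon>\<^sup>2 + 2 * \<epsilon> * (if \<Delta> = 0 then 1 else min 1 (10 * \<epsilon> / \<Delta>))"
    by simp
  finally show ?thesis unfolding \<Delta>_def Let_def .
qed

end
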